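(* Let $n\in\mathbb{N}$ and let $u$, $F_n$, $G_{n-1}$, $H_n$ be as follows: $u$ is a smooth complex-valued function on $\mathbb{R}$; $F_n(z,x)=\sum_{j=0}^n f_{n-j}(x)z^j$, $H_n(z,x)=\sum_{j=0}^n h_{n-j}(x)z^j$ with $f_0=h_0=1$, $G_{n-1}(z,x)=\sum_{j=0}^{n-1}g_{n-1-j}(x)z^j$, with smooth coefficients, satisfying for all $z$, $x$: $F_{n,x}=-iu_xF_n-2izG_{n-1}$, $H_{n,x}=iu_xH_n+2izG_{n-1}$, $G_{n-1,x}=i(H_n-F_n)$, and $z^2G_{n-1}^2+zF_nH_n=R_{2n+1}(z)=\prod_{m=0}^{2n}(z-E_m)$ independent of $x$, where $E_0=0$ and $E_0,\dots,E_{2n}$ are pairwise distinct. Let $\mathcal{K}_n$ be the (nonsingular) curve $y^2=R_{2n+1}(z)$ compactified by $P_\infty$. Write $F_n(z,x)=\prod_{j=1}^n(z-\mu_j(x))$, $H_n(z,x)=\prod_{j=1}^n(z-\nu_j(x))$ and set $\hat\mu_j(x)=(\mu_j(x),-\mu_j(x)G_{n-1}(\mu_j(x),x))\in\mathcal{K}_n$, $\hat\nu_j(x)=(\nu_j(x),\nu_j(x)G_{n-1}(\nu_j(x),x))\in\mathcal{K}_n$. Suppose the zeros $\mu_1(x),\dots,\mu_n(x)$ are pairwise distinct for $x\in\Omega$, where $\Omega\subseteq\mathbb{R}$ is an open interval. Then $$\mu_{j,x}(x)=-2i\frac{y(\hat\mu_j(x))}{\prod_{\ell=1,\ell\neq j}^n(\mu_j(x)-\mu_\ell(x))},\qquad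 j=1,\dots,n,\ x\in\Omega,$$ and for any fixed $x_0\in\Omega$ and initial conditions $\hat\mu_j(x_0)\in\mathcal{K}_n$, $j=1,\dots,n$, this initial value problem has a unique solution $\{\hat\mu_j(x)\}_{j=1}^n$ with $\hat\mu_j\in C^\infty(\Omega,\mathcal{K}_n)$. The identical statements hold with $\mu$ replaced by $\nu$ (assuming the $\nu_j(x)$ pairwise distinct on $\Omega$); in particular $\nu_{j,x}(x)=-2i\,y(\hat\nu_j(x))/\prod_{\ell=1,\ell\neq j}^n(\nu_j(x)-\nu_\ell(x))$.
   Context: $y(P)$ denotes the meromorphic function on $\mathcal{K}_n$ with $y^2=R_{2n+1}(z)$; points of $\mathcal{K}_n\setminus\{P_\infty\}$ are written $P=(z,y)$. *)

theory Defs
  imports "HOL-Analysis.Analysis"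
begin

definition vderiv :: "(real \<Rightarrow> complex) \<Rightarrow> real \<Rightarrow> complex" where
  "vderiv f = (\<lambda>x. vector_derivative f (at x))"

definition smooth_on :: "real set \<Rightarrow> (real \<Rightarrow> complex) \<Rightarrow> bool" where
  "smooth_on S f \<longleftrightarrow> (\<forall>k. \<forall>x\<in>S. ((vderiv ^^ k) f) differentiable (at x))"

definition Fpoly :: "nat \<Rightarrow> (nat \<Rightarrow> real \<Rightarrow> complex) \<Rightarrow> complex \<Rightarrow> real \<Rightarrow> complex" where
  "Fpoly n f z x = (\<Sum>j\<le>n. f (n - j) x * z ^ j)"

definition Gpoly :: "nat \<Rightarrow> (nat \<Rightarrow> real \<Rightarrow> complex) \<Rightarrow> complex \<Rightarrow> real \<Rightarrow> complex" where
  "Gpoly n g z x = (\<Sum>j<n. g (n - 1 - j) x * z ^ j)"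

definition Rfun :: "nat \<Rightarrow> (nat \<Rightarrow> complex) \<Rightarrow> complex \<Rightarrow> complex" where
  "Rfun n E z = (\<Prod>m\<le>2*n. z - E m)"

datatype curve_point = Pinf | Aff complex complex

definition Kn :: "nat \<Rightarrow> (nat \<Rightarrow> complex) \<Rightarrow> curve_point set" where
  "Kn n E = {Pinf} \<union> {Aff z y | z y. y\<^sup>2 = Rfun n E z}"

fun ycoord :: "curve_point \<Rightarrow> complex" where
  "ycoord (Aff z y) = y"
| "ycoord Pinf = 0"  (* pole; value irrelevant *)

text \<open>The ODE mu_{j,x} = -2i y(hat mu_j)/prod(...) is read
  as the vector field on the (nonsingular, embedded) curve K_n, whose y-component is
  y_{j,x} = -i R'(z_j)/prod(...) (tangency to y^2 = R(z)).\<close>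

definition dubrovin_sol ::
  "nat \<Rightarrow> (nat \<Rightarrow> complex) \<Rightarrow> real set \<Rightarrow> (nat \<Rightarrow> real \<Rightarrow> complex) \<Rightarrow> (nat \<Rightarrow> real \<Rightarrow> complex) \<Rightarrow> bool"
  where
  "dubrovin_sol n E Om z w \<longleftrightarrow>
     (\<forall>j\<in>{1..n}. smooth_on Om (z j) \<and> smooth_on Om (w j)) \<and>
     (\<forall>j\<in>{1..n}. \<forall>x\<in>Om. Aff (z j x) (w j x) \<in> Kn n E) \<and>
     (\<forall>x\<in>Om. \<forall>j\<in>{1..n}. \<forall>l\<in>{1..n}. j \<noteq> l \<longrightarrow> z j x \<noteq> z l x) \<and>
     (\<forall>j\<in>{1..n}. \<forall>x\<in>Om.
        (z j has_vector_derivative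
           (-2 * \<i> * ycoord (Aff (z j x) (w j x)) / (\<Prod>l\<in>{1..n} - {j}. z j x - z l x))) (at x) \<and>
        (w j has_vector_derivative
           (- \<i> * deriv (Rfun n E) (z j x) / (\<Prod>l\<in>{1..n} - {j}. z j x - z l x))) (at x))"

definition dubrovin_result ::
  "nat \<Rightarrow> (nat \<Rightarrow> complex) \<Rightarrow> real set \<Rightarrow> (nat \<Rightarrow> real \<Rightarrow> complex) \<Rightarrow> (nat \<Rightarrow> real \<Rightarrow> complex) \<Rightarrow> bool"
  where
  "dubrovin_result n E Om zeta w \<longleftrightarrow>
     dubrovin_sol n E Om zeta w \<and>
     (\<forall>x0\<in>Om. \<forall>z' w'. dubrovin_sol n E Om z' w' \<and>
        (\<forall>j\<in>{1..n}. z' j x0 = zeta j x0 \<and> w' j x0 = w j x0) \<longrightarrow>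
        (\<forall>j\<in>{1..n}. \<forall>x\<in>Om. z' j x = zeta j x \<and> w' j x = w j x))"

end

theory Submission
  imports Defs "HOL-Complex_Analysis.Complex_Analysis"
begin

text \<open>
  Differentiating \<open>F(\<mu>\<^sub>j(x), x) = 0\<close> at a simple zero gives
  \<open>\<mu>\<^sub>j' = - F\<^sub>x(\<mu>\<^sub>j) / F\<^sub>z(\<mu>\<^sub>j)\<close>, where \<open>F\<^sub>z(\<mu>\<^sub>j)\<close> is the product of the
  \<open>\<mu>\<^sub>j - \<mu>\<^sub>l\<close>, \<open>l \<noteq> j\<close>, and the equation for \<open>F\<^sub>x\<close> gives
  \<open>F\<^sub>x(\<mu>\<^sub>j) = -2i \<mu>\<^sub>j G(\<mu>\<^sub>j) = 2i y(\<mu>\<^sub>j)\<close>. Differentiating \<open>y = -\<mu>\<^sub>j G(\<mu>\<^sub>j, x)\<close>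
  in the same way, using \<open>G\<^sub>x = i (H - F)\<close>, and comparing with the derivative of
  \<open>R = z\<^sup>2 G\<^sup>2 + z F H\<close> at \<open>z = \<mu>\<^sub>j\<close> shows that the points \<open>(\<mu>\<^sub>j, y)\<close> move along the
  vector field of the Dubrovin system on the curve. This vector field is a rational
  function of the coordinates, holomorphic while the \<open>\<mu>\<^sub>j\<close> stay distinct: solutions are
  therefore smooth (bootstrap through the equation), and, the field being locally
  Lipschitz, two solutions agreeing at one point agree near every common point, hence on
  the whole interval by connectedness. Exchanging the roles of \<open>F\<close> and \<open>H\<close> flips the
  sign of \<open>y\<close> and treats the \<open>\<nu>\<^sub>j\<close>.
\<close>

section \<open>Functions with finitely many derivatives\<close>

definition Ck_on :: "real set \<Rightarrow> nat \<Rightarrow> (real \<Rightarrow> complex) \<Rightarrow> bool" where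
  "Ck_on S k f \<longleftrightarrow> (\<forall>m\<le>k. \<forall>x\<in>S. ((vderiv ^^ m) f) differentiable (at x))"

lemma smooth_on_iff_Ck_on: "smooth_on S f \<longleftrightarrow> (\<forall>k. Ck_on S k f)"
  unfolding smooth_on_def Ck_on_def by blast

lemma Ck_on_0: "Ck_on S 0 f \<longleftrightarrow> (\<forall>x\<in>S. f differentiable (at x))"
  unfolding Ck_on_def by simp

lemma Ck_on_Suc: "Ck_on S (Suc k) f \<longleftrightarrow> (\<forall>x\<in>S. f differentiable (at x)) \<and> Ck_on S k (vderiv f)"
proof -
  have "(vderiv ^^ Suc m) f = (vderiv ^^ m) (vderiv f)" for m
    by (simp add: funpow_Suc_right del: funpow.simps)
  then show ?thesis
    unfolding Ck_on_def by (metis Suc_le_mono funpow_0 le0 not0_implies_Suc)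
qed

lemma Ck_on_SucD: "Ck_on S (Suc k) f \<Longrightarrow> Ck_on S k f"
  unfolding Ck_on_def by auto

lemma Ck_on_has_vderiv: "Ck_on S k f \<Longrightarrow> x \<in> S \<Longrightarrow> (f has_vector_derivative vderiv f x) (at x)"
  unfolding Ck_on_def vderiv_def by (metis funpow_0 le0 vector_derivative_works)

lemma Ck_on_cong:
  assumes "open S" "\<And>x. x \<in> S \<Longrightarrow> f x = g x" "Ck_on S k f"
  shows "Ck_on S k g"
  using assms(2,3)
proof (induction k arbitrary: f g)
  case 0
  then show ?case
    unfolding Ck_on_0
    by (metis assms(1) differentiableI_vector has_vector_derivative_transform_within_open
        vector_derivative_works)
next
  case (Suc k)
  have g': "(g has_vector_derivative vderiv f x) (at x)" if "x \<in> S" for x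
    using has_vector_derivative_transform_within_open[OF Ck_on_has_vderiv[OF Suc.prems(2) that]]
      assms(1) that Suc.prems(1) by blast
  then have "vderiv g x = vderiv f x" if "x \<in> S" for x
    using that unfolding vderiv_def by (simp add: vector_derivative_at)
  with g' Suc show ?case
    unfolding Ck_on_Suc by (metis differentiableI_vector)
qed

lemma Ck_on_SucI:
  assumes "open S" "\<And>x. x \<in> S \<Longrightarrow> (f has_vector_derivative f' x) (at x)" "Ck_on S k f'"
  shows "Ck_on S (Suc k) f"
proof -
  have "f' x = vderiv f x" if "x \<in> S" for x
    using assms(2)[OF that] unfolding vderiv_def by (simp add: vector_derivative_at)
  then have "Ck_on S k (vderiv f)"
    using Ck_on_cong[OF assms(1) _ assms(3)] by blast
  with assms(2) show ?thesis
    unfolding Ck_on_Suc using differentiableI_vector by blast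
qed

lemma Ck_on_const: "Ck_on S k (\<lambda>x. c)"
proof -
  have "vderiv (\<lambda>x. c) = (\<lambda>x. 0)" for c :: complex
    unfolding vderiv_def by (auto intro!: ext vector_derivative_at)
  then have "(vderiv ^^ m) (\<lambda>x. c) = (if m = 0 then (\<lambda>x. c) else (\<lambda>x. 0))" for m
    by (induction m) auto
  then show ?thesis
    unfolding Ck_on_def by simp
qed

lemma Ck_on_add:
  assumes "open S" "Ck_on S k f" "Ck_on S k g"
  shows "Ck_on S k (\<lambda>x. f x + g x)"
  using assms(2,3)
proof (induction k arbitrary: f g)
  case 0
  then show ?case unfolding Ck_on_0 by auto
next
  case (Suc k)
  show ?case
  proof (rule Ck_on_SucI[OF assms(1)])
    show "((\<lambda>x. f x + g x) has_vector_derivative vderiv f x + vderiv g x) (at x)" if "x \<in> S" for x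
      using Ck_on_has_vderiv Suc.prems that by (auto intro!: derivative_eq_intros)
    show "Ck_on S k (\<lambda>x. vderiv f x + vderiv g x)"
      using Suc unfolding Ck_on_Suc by blast
  qed
qed

lemma Ck_on_mult:
  assumes "open S" "Ck_on S k f" "Ck_on S k g"
  shows "Ck_on S k (\<lambda>x. f x * g x)"
  using assms(2,3)
proof (induction k arbitrary: f g)
  case 0
  then show ?case unfolding Ck_on_0 by (auto intro: differentiable_mult)
next
  case (Suc k)
  show ?case
  proof (rule Ck_on_SucI[OF assms(1)])
    show "((\<lambda>x. f x * g x) has_vector_derivative f x * vderiv g x + vderiv f x * g x) (at x)"
      if "x \<in> S" for x
      using Ck_on_has_vderiv Suc.prems that by (auto intro!: has_vector_derivative_mult)
    have "Ck_on S k (\<lambda>x. f x * vderiv g x)" "Ck_on S k (\<lambda>x. vderiv f x * g x)"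
      using Suc Ck_on_SucD unfolding Ck_on_Suc by blast+
    then show "Ck_on S k (\<lambda>x. f x * vderiv g x + vderiv f x * g x)"
      using Ck_on_add assms(1) by blast
  qed
qed

lemma has_vector_derivative_compose_holomorphic:
  assumes "h holomorphic_on U" "open U" "f x \<in> U" "(f has_vector_derivative f') (at x)"
  shows "((\<lambda>x. h (f x)) has_vector_derivative f' * deriv h (f x)) (at x)"
  using field_vector_diff_chain_at[OF assms(4) holomorphic_derivI[OF assms(1-3), of UNIV]]
  by (simp add: o_def)

lemma Ck_on_compose_holomorphic:
  assumes "open S" "open U" "h holomorphic_on U" "\<And>x. x \<in> S \<Longrightarrow> f x \<in> U" "Ck_on S k f"
  shows "Ck_on S k (\<lambda>x. h (f x))"
  using assms(3-5)
proof (induction k arbitrary: h f)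
  case 0
  have "((\<lambda>x. h (f x)) has_vector_derivative vderiv f x * deriv h (f x)) (at x)" if "x \<in> S" for x
    by (rule has_vector_derivative_compose_holomorphic[OF 0(1) assms(2) 0(2)[OF that]
          Ck_on_has_vderiv[OF 0(3) that]])
  then show ?case
    unfolding Ck_on_0 using differentiableI_vector by blast
next
  case (Suc k)
  have "((\<lambda>x. h (f x)) has_vector_derivative vderiv f x * deriv h (f x)) (at x)" if "x \<in> S" for x
    by (rule has_vector_derivative_compose_holomorphic[OF Suc.prems(1) assms(2)
          Suc.prems(2)[OF that] Ck_on_has_vderiv[OF Suc.prems(3) that]])
  moreover have "Ck_on S k (\<lambda>x. vderiv f x * deriv h (f x))"
    using Suc.IH[OF holomorphic_deriv[OF Suc.prems(1) assms(2)] Suc.prems(2)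
        Ck_on_SucD[OF Suc.prems(3)]] Suc.prems(3) Ck_on_mult[OF assms(1)]
    unfolding Ck_on_Suc by blast
  ultimately show ?case
    by (rule Ck_on_SucI[OF assms(1)])
qed

lemma Ck_on_diff:
  assumes "open S" "Ck_on S k f" "Ck_on S k g"
  shows "Ck_on S k (\<lambda>x. f x - g x)"
  using Ck_on_add[OF assms(1,2) Ck_on_mult[OF assms(1) Ck_on_const[of S k "-1"] assms(3)]] by simp

lemma Ck_on_divide:
  assumes "open S" "Ck_on S k f" "Ck_on S k g" "\<And>x. x \<in> S \<Longrightarrow> g x \<noteq> 0"
  shows "Ck_on S k (\<lambda>x. f x / g x)"
proof -
  have "Ck_on S k (\<lambda>x. inverse (g x))"
    by (rule Ck_on_compose_holomorphic[OF assms(1) open_delete[OF open_UNIV, of 0]])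
      (use assms(3,4) in \<open>auto intro: holomorphic_on_inverse holomorphic_on_id\<close>)
  from Ck_on_mult[OF assms(1,2) this] show ?thesis
    by (simp add: divide_inverse)
qed

lemma Ck_on_prod:
  assumes "open S" "finite A" "\<And>a. a \<in> A \<Longrightarrow> Ck_on S k (f a)"
  shows "Ck_on S k (\<lambda>x. \<Prod>a\<in>A. f a x)"
  using assms(2,3)
  by (induction A rule: finite_induct) (auto intro: Ck_on_const Ck_on_mult[OF assms(1)])

section \<open>Differentiating a moving root of a polynomial\<close>

lemma has_vector_derivative_iff_slope:
  fixes f :: "real \<Rightarrow> 'a::real_normed_vector"
  shows "(f has_vector_derivative D) (at x within S) \<longleftrightarrow>
    ((\<lambda>y. (f y - f x) /\<^sub>R (y - x)) \<longlongrightarrow> D) (at x within S)"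
proof -
  have "norm (f y - f x - (y - x) *\<^sub>R D) / norm (y - x) = norm ((f y - f x) /\<^sub>R (y - x) - D)"
    if "y \<noteq> x" for y
  proof -
    have "(f y - f x) /\<^sub>R (y - x) - D = (f y - f x - (y - x) *\<^sub>R D) /\<^sub>R (y - x)"
      using that by (simp add: scaleR_diff_right)
    then show ?thesis
      by (simp add: divide_inverse mult.commute)
  qed
  then have "((\<lambda>y. norm (f y - f x - (y - x) *\<^sub>R D) / norm (y - x)) \<longlongrightarrow> 0) (at x within S) \<longleftrightarrow>
      ((\<lambda>y. norm ((f y - f x) /\<^sub>R (y - x) - D)) \<longlongrightarrow> 0) (at x within S)"
    by (intro Lim_cong_within) auto
  then show ?thesis
    by (simp add: has_vector_derivative_def has_derivative_iff_norm bounded_linear_scaleR_left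
        tendsto_norm_zero_iff LIM_zero_iff)
qed

lemma has_field_derivative_polynomial:
  fixes c :: "nat \<Rightarrow> 'a::real_normed_field"
  shows "((\<lambda>z. \<Sum>i\<in>A. c i * z ^ i) has_field_derivative
    (\<Sum>i\<in>A. c i * (of_nat i * z ^ (i - 1)))) (at z)"
  by (auto intro!: derivative_eq_intros simp: algebra_simps)

lemma polynomial_family_has_vector_derivative:
  fixes c :: "nat \<Rightarrow> real \<Rightarrow> 'a::real_normed_field" and \<zeta> :: "real \<Rightarrow> 'a"
  assumes "finite A" "\<And>i. i \<in> A \<Longrightarrow> c i differentiable (at x)"
    and Pt: "((\<lambda>t. \<Sum>i\<in>A. c i t * \<zeta> x ^ i) has_vector_derivative Pt) (at x)"
    and \<zeta>: "(\<zeta> has_vector_derivative d) (at x)"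
  shows "((\<lambda>t. \<Sum>i\<in>A. c i t * \<zeta> t ^ i) has_vector_derivative
    Pt + d * (\<Sum>i\<in>A. c i x * (of_nat i * \<zeta> x ^ (i - 1)))) (at x)"
proof -
  define c' where "c' i = vector_derivative (c i) (at x)" for i
  have c': "(c i has_vector_derivative c' i) (at x)" if "i \<in> A" for i
    using assms(2)[OF that] unfolding c'_def by (simp add: vector_derivative_works)
  have "((\<lambda>t. \<Sum>i\<in>A. c i t * \<zeta> x ^ i) has_vector_derivative (\<Sum>i\<in>A. c' i * \<zeta> x ^ i)) (at x)"
    using c' by (auto intro!: derivative_eq_intros)
  with Pt have Pt_eq: "Pt = (\<Sum>i\<in>A. c' i * \<zeta> x ^ i)"
    by (rule vector_derivative_unique_at)
  have power: "((\<lambda>t. \<zeta> t ^ i) has_vector_derivative d * (of_nat i * \<zeta> x ^ (i - 1))) (at x)" for i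
  proof -
    have "((\<lambda>z. z ^ i) has_field_derivative of_nat i * \<zeta> x ^ (i - 1)) (at (\<zeta> x))"
      by (auto intro!: derivative_eq_intros)
    from field_vector_diff_chain_at[OF \<zeta> this] show ?thesis
      by (simp add: o_def)
  qed
  have "((\<lambda>t. \<Sum>i\<in>A. c i t * \<zeta> t ^ i) has_vector_derivative
      (\<Sum>i\<in>A. c i x * (d * (of_nat i * \<zeta> x ^ (i - 1))) + c' i * \<zeta> x ^ i)) (at x)"
    using c' power by (auto intro!: has_vector_derivative_sum has_vector_derivative_mult)
  then show ?thesis
    unfolding Pt_eq by (simp add: sum.distrib sum_distrib_left algebra_simps)
qed

text \<open>Implicit differentiation of \<open>P(\<zeta> t, t) = 0\<close> at a simple root: write
  \<open>P(z, x) - P(\<zeta> x, x) = Q z * (z - \<zeta> x)\<close> (Caratheodory) and pass to the limit in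
  the difference quotients of \<open>\<zeta>\<close> and of the coefficients.\<close>

lemma polynomial_root_has_vector_derivative:
  fixes c :: "nat \<Rightarrow> real \<Rightarrow> 'a::real_normed_field" and \<zeta> :: "real \<Rightarrow> 'a"
  assumes "finite A" and c: "\<And>i. i \<in> A \<Longrightarrow> c i differentiable (at x)"
    and Pt: "((\<lambda>t. \<Sum>i\<in>A. c i t * \<zeta> x ^ i) has_vector_derivative Pt) (at x)"
    and Pz: "((\<lambda>z. \<Sum>i\<in>A. c i x * z ^ i) has_field_derivative Pz) (at (\<zeta> x))" "Pz \<noteq> 0"
    and "isCont \<zeta> x"
    and root: "\<forall>\<^sub>F t in nhds x. (\<Sum>i\<in>A. c i t * \<zeta> t ^ i) = 0"
  shows "(\<zeta> has_vector_derivative - Pt / Pz) (at x)"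
proof -
  define a where "a = \<zeta> x"
  define P where "P z t = (\<Sum>i\<in>A. c i t * z ^ i)" for z t
  define c' where "c' i = vector_derivative (c i) (at x)" for i
  obtain Q where Q: "\<And>z. P z x - P a x = Q z * (z - a)" "isCont Q a" "Q a = Pz"
    using Pz(1) unfolding CARAT_DERIV P_def a_def by blast
  define W where "W t = (\<Sum>i\<in>A. (c i t - c i x) /\<^sub>R (t - x) * \<zeta> t ^ i)" for t
  have W_eq: "P z t - P z x = (t - x) *\<^sub>R (\<Sum>i\<in>A. (c i t - c i x) /\<^sub>R (t - x) * z ^ i)"
    if "t \<noteq> x" for z t
  proof -
    have "P z t - P z x = (\<Sum>i\<in>A. (c i t - c i x) * z ^ i)"
      unfolding P_def by (simp add: sum_subtractf algebra_simps)
    also have "\<dots> = (\<Sum>i\<in>A. (t - x) *\<^sub>R ((c i t - c i x) /\<^sub>R (t - x) * z ^ i))"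
      using that by (simp flip: mult_scaleR_left)
    finally show ?thesis
      by (simp add: scaleR_sum_right)
  qed
  have "((\<lambda>t. \<Sum>i\<in>A. c i t * \<zeta> x ^ i) has_vector_derivative (\<Sum>i\<in>A. c' i * \<zeta> x ^ i)) (at x)"
    using c unfolding c'_def
    by (auto intro!: derivative_eq_intros simp: vector_derivative_works[symmetric])
  with Pt have Pt_eq: "Pt = (\<Sum>i\<in>A. c' i * a ^ i)"
    unfolding a_def by (rule vector_derivative_unique_at)
  have \<zeta>_lim: "(\<zeta> \<longlongrightarrow> a) (at x)"
    using \<open>isCont \<zeta> x\<close> unfolding a_def isCont_def .
  have "(W \<longlongrightarrow> Pt) (at x)"
    unfolding W_def Pt_eq
  proof (intro tendsto_sum tendsto_mult tendsto_power \<zeta>_lim)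
    show "((\<lambda>t. (c i t - c i x) /\<^sub>R (t - x)) \<longlongrightarrow> c' i) (at x)" if "i \<in> A" for i
      using c[OF that] unfolding c'_def vector_derivative_works has_vector_derivative_iff_slope .
  qed
  moreover have "((\<lambda>t. Q (\<zeta> t)) \<longlongrightarrow> Pz) (at x)"
    using isCont_tendsto_compose[OF Q(2) \<zeta>_lim] Q(3) by simp
  ultimately have lim: "((\<lambda>t. - W t / Q (\<zeta> t)) \<longlongrightarrow> - Pt / Pz) (at x)"
    using Pz(2) by (intro tendsto_intros)
  have "\<forall>\<^sub>F t in at x. P (\<zeta> t) t = 0"
    using root unfolding P_def eventually_nhds_conv_at by simp
  moreover have "\<forall>\<^sub>F t in at x. Q (\<zeta> t) \<noteq> 0"
    using \<open>((\<lambda>t. Q (\<zeta> t)) \<longlongrightarrow> Pz) (at x)\<close> Pz(2) by (rule tendsto_imp_eventually_ne)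
  moreover have "\<forall>\<^sub>F t in at x. t \<noteq> x"
    by (simp add: eventually_at_filter)
  ultimately have "\<forall>\<^sub>F t in at x. - W t / Q (\<zeta> t) = (\<zeta> t - \<zeta> x) /\<^sub>R (t - x)"
  proof eventually_elim
    case (elim t)
    have "P a x = 0"
      using eventually_nhds_x_imp_x[OF root] unfolding P_def a_def .
    then have "0 = (t - x) *\<^sub>R W t + Q (\<zeta> t) * (\<zeta> t - a)"
      using elim(1,3) W_eq[of t "\<zeta> t"] Q(1)[of "\<zeta> t"] unfolding W_def by (simp add: algebra_simps)
    then have "(\<zeta> t - a) * Q (\<zeta> t) = of_real (t - x) * - W t"
      by (simp add: scaleR_conv_of_real algebra_simps eq_neg_iff_add_eq_0)
    then show ?case
      using elim(2,3) unfolding a_def by (simp add: scaleR_conv_of_real field_simps)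
  qed
  with lim show ?thesis
    unfolding has_vector_derivative_iff_slope by (rule Lim_transform_eventually)
qed

section \<open>Lipschitz estimates in finitely many coordinates\<close>

definition dist_on :: "'i set \<Rightarrow> ('i \<Rightarrow> 'a::real_normed_vector) \<Rightarrow> ('i \<Rightarrow> 'a) \<Rightarrow> real" where
  "dist_on I S T = (\<Sum>i\<in>I. norm (S i - T i))"

lemma dist_on_nonneg: "0 \<le> dist_on I S T"
  unfolding dist_on_def by (simp add: sum_nonneg)

lemma dist_on_self [simp]: "dist_on I S S = 0"
  unfolding dist_on_def by simp

lemma norm_le_dist_on: "finite I \<Longrightarrow> i \<in> I \<Longrightarrow> norm (S i - T i) \<le> dist_on I S T"
  unfolding dist_on_def by (rule member_le_sum) auto

lemma dist_on_eq_0_iff: "finite I \<Longrightarrow> dist_on I S T = 0 \<longleftrightarrow> (\<forall>i\<in>I. S i = T i)"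
  unfolding dist_on_def by (simp add: sum_nonneg_eq_0_iff)

definition lipschitz_near ::
  "'i set \<Rightarrow> (('i \<Rightarrow> 'a::real_normed_vector) \<Rightarrow> 'b::real_normed_vector) \<Rightarrow> ('i \<Rightarrow> 'a) \<Rightarrow> bool" where
  "lipschitz_near I \<Phi> S0 \<longleftrightarrow> (\<exists>r>0. \<exists>L\<ge>0. \<forall>S T. dist_on I S S0 < r \<longrightarrow> dist_on I T S0 < r \<longrightarrow>
      norm (\<Phi> S - \<Phi> T) \<le> L * dist_on I S T)"

lemma lipschitz_nearI:
  assumes "r > 0" "L \<ge> 0"
    "\<And>S T. dist_on I S S0 < r \<Longrightarrow> dist_on I T S0 < r \<Longrightarrow> norm (\<Phi> S - \<Phi> T) \<le> L * dist_on I S T"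
  shows "lipschitz_near I \<Phi> S0"
  unfolding lipschitz_near_def using assms by blast

lemma lipschitz_near_const: "lipschitz_near I (\<lambda>S. c) S0"
  by (rule lipschitz_nearI[of 1 0]) auto

lemma lipschitz_near_component: "finite I \<Longrightarrow> i \<in> I \<Longrightarrow> lipschitz_near I (\<lambda>S. S i) S0"
  by (rule lipschitz_nearI[of 1 1]) (auto simp: norm_le_dist_on)

lemma lipschitz_near_add:
  assumes "lipschitz_near I \<Phi> S0" "lipschitz_near I \<Psi> S0"
  shows "lipschitz_near I (\<lambda>S. \<Phi> S + \<Psi> S) S0"
proof -
  obtain r1 L1 where 1: "r1 > 0" "L1 \<ge> 0"
    "\<And>S T. dist_on I S S0 < r1 \<Longrightarrow> dist_on I T S0 < r1 \<Longrightarrow> norm (\<Phi> S - \<Phi> T) \<le> L1 * dist_on I S T"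
    using assms(1) unfolding lipschitz_near_def by blast
  obtain r2 L2 where 2: "r2 > 0" "L2 \<ge> 0"
    "\<And>S T. dist_on I S S0 < r2 \<Longrightarrow> dist_on I T S0 < r2 \<Longrightarrow> norm (\<Psi> S - \<Psi> T) \<le> L2 * dist_on I S T"
    using assms(2) unfolding lipschitz_near_def by blast
  show ?thesis
  proof (rule lipschitz_nearI[of "min r1 r2" "L1 + L2"])
    fix S T assume "dist_on I S S0 < min r1 r2" "dist_on I T S0 < min r1 r2"
    then have "norm (\<Phi> S - \<Phi> T) + norm (\<Psi> S - \<Psi> T) \<le> (L1 + L2) * dist_on I S T"
      using 1(3) 2(3) by (simp add: distrib_right add_mono)
    then show "norm (\<Phi> S + \<Psi> S - (\<Phi> T + \<Psi> T)) \<le> (L1 + L2) * dist_on I S T"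
      by (smt (verit) add_diff_add norm_triangle_ineq)
  qed (use 1 2 in auto)
qed

lemma lipschitz_near_mult:
  fixes \<Phi> \<Psi> :: "('i \<Rightarrow> 'a::real_normed_vector) \<Rightarrow> 'b::real_normed_algebra"
  assumes "lipschitz_near I \<Phi> S0" "lipschitz_near I \<Psi> S0"
  shows "lipschitz_near I (\<lambda>S. \<Phi> S * \<Psi> S) S0"
proof -
  obtain r1 L1 where 1: "r1 > 0" "L1 \<ge> 0"
    "\<And>S T. dist_on I S S0 < r1 \<Longrightarrow> dist_on I T S0 < r1 \<Longrightarrow> norm (\<Phi> S - \<Phi> T) \<le> L1 * dist_on I S T"
    using assms(1) unfolding lipschitz_near_def by blast
  obtain r2 L2 where 2: "r2 > 0" "L2 \<ge> 0"
    "\<And>S T. dist_on I S S0 < r2 \<Longrightarrow> dist_on I T S0 < r2 \<Longrightarrow> norm (\<Psi> S - \<Psi> T) \<le> L2 * dist_on I S T"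
    using assms(2) unfolding lipschitz_near_def by blast
  define B1 where "B1 = norm (\<Phi> S0) + L1 * r1"
  define B2 where "B2 = norm (\<Psi> S0) + L2 * r2"
  have bounds: "norm (\<Phi> S) \<le> B1" "norm (\<Psi> S) \<le> B2" if "dist_on I S S0 < min r1 r2" for S
  proof -
    have "norm (\<Phi> S - \<Phi> S0) \<le> L1 * r1" "norm (\<Psi> S - \<Psi> S0) \<le> L2 * r2"
      using 1(3)[of S S0] 2(3)[of S S0] that 1(1,2) 2(1,2) dist_on_nonneg[of I S S0]
      by (auto intro: order_trans[OF _ mult_left_mono])
    then show "norm (\<Phi> S) \<le> B1" "norm (\<Psi> S) \<le> B2"
      unfolding B1_def B2_def by (smt (verit) norm_triangle_sub)+
  qed
  show ?thesis
  proof (rule lipschitz_nearI[of "min r1 r2" "B1 * L2 + B2 * L1"])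
    fix S T assume ST: "dist_on I S S0 < min r1 r2" "dist_on I T S0 < min r1 r2"
    have "\<Phi> S * \<Psi> S - \<Phi> T * \<Psi> T = \<Phi> S * (\<Psi> S - \<Psi> T) + (\<Phi> S - \<Phi> T) * \<Psi> T"
      by (simp add: algebra_simps)
    then have "norm (\<Phi> S * \<Psi> S - \<Phi> T * \<Psi> T) \<le>
        norm (\<Phi> S) * norm (\<Psi> S - \<Psi> T) + norm (\<Phi> S - \<Phi> T) * norm (\<Psi> T)"
      by (smt (verit) norm_mult_ineq norm_triangle_ineq)
    also have "\<dots> \<le> B1 * (L2 * dist_on I S T) + (L1 * dist_on I S T) * B2"
      using ST 1 2 bounds[OF ST(1)] bounds[OF ST(2)]
      by (intro add_mono mult_mono) (auto simp: dist_on_nonneg B1_def)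
    finally show "norm (\<Phi> S * \<Psi> S - \<Phi> T * \<Psi> T) \<le> (B1 * L2 + B2 * L1) * dist_on I S T"
      by (simp add: algebra_simps)
  qed (use 1 2 in \<open>auto simp: B1_def B2_def\<close>)
qed

lemma lipschitz_near_compose_holomorphic:
  fixes \<Psi> :: "('i \<Rightarrow> 'a::real_normed_vector) \<Rightarrow> complex"
  assumes "lipschitz_near I \<Psi> S0" "h holomorphic_on U" "open U" "\<Psi> S0 \<in> U"
  shows "lipschitz_near I (\<lambda>S. h (\<Psi> S)) S0"
proof -
  obtain r L where L: "r > 0" "L \<ge> 0"
    "\<And>S T. dist_on I S S0 < r \<Longrightarrow> dist_on I T S0 < r \<Longrightarrow> norm (\<Psi> S - \<Psi> T) \<le> L * dist_on I S T"
    using assms(1) unfolding lipschitz_near_def by blast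
  obtain \<epsilon> where \<epsilon>: "\<epsilon> > 0" "cball (\<Psi> S0) \<epsilon> \<subseteq> U"
    using assms(3,4) open_contains_cball by blast
  define K where "K = cball (\<Psi> S0) \<epsilon>"
  define r' where "r' = min r (\<epsilon> / (L + 1))"
  have r': "r' > 0" "r' \<le> r" "L * r' \<le> \<epsilon>"
    using L(1,2) \<epsilon>(1) unfolding r'_def by (auto simp: min_def field_simps)
  have in_K: "\<Psi> S \<in> K" if "dist_on I S S0 < r'" for S
  proof -
    have "norm (\<Psi> S - \<Psi> S0) \<le> L * dist_on I S S0"
      using L(3)[of S S0] that r' by simp
    also have "\<dots> \<le> L * r'"
      using that L(2) by (simp add: mult_left_mono)
    finally show ?thesis
      using r'(3) unfolding K_def by (simp add: dist_norm norm_minus_commute)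
  qed
  have "bounded (deriv h ` K)"
    unfolding K_def using \<epsilon>(2)
    by (intro compact_imp_bounded compact_continuous_image holomorphic_on_imp_continuous_on
        holomorphic_on_subset[OF holomorphic_deriv[OF assms(2,3)]]) auto
  then obtain B where B: "B > 0" "\<forall>w\<in>deriv h ` K. norm w \<le> B"
    unfolding bounded_pos by blast
  show ?thesis
  proof (rule lipschitz_nearI[of r' "B * L"])
    fix S T assume ST: "dist_on I S S0 < r'" "dist_on I T S0 < r'"
    have "norm (h (\<Psi> S) - h (\<Psi> T)) \<le> B * norm (\<Psi> S - \<Psi> T)"
    proof (rule field_differentiable_bound[of K])
      show "(h has_field_derivative deriv h z) (at z within K)" if "z \<in> K" for z
        using holomorphic_derivI[OF assms(2,3)] that \<epsilon>(2) unfolding K_def by blast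
      show "convex K"
        unfolding K_def by simp
    qed (use B(2) in_K ST in auto)
    also have "\<dots> \<le> B * (L * dist_on I S T)"
      using L(3) ST r'(2) B(1) by (simp add: mult_left_mono)
    finally show "norm (h (\<Psi> S) - h (\<Psi> T)) \<le> B * L * dist_on I S T"
      by simp
  qed (use r' B L in auto)
qed

lemma lipschitz_near_diff:
  fixes \<Phi> \<Psi> :: "('i \<Rightarrow> 'a::real_normed_vector) \<Rightarrow> 'b::real_normed_vector"
  assumes "lipschitz_near I \<Phi> S0" "lipschitz_near I \<Psi> S0"
  shows "lipschitz_near I (\<lambda>S. \<Phi> S - \<Psi> S) S0"
proof -
  have "lipschitz_near I (\<lambda>S. - \<Psi> S) S0"
    using assms(2) unfolding lipschitz_near_def by (simp add: norm_minus_commute)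
  from lipschitz_near_add[OF assms(1) this] show ?thesis
    by simp
qed

lemma lipschitz_near_divide:
  fixes \<Phi> \<Psi> :: "('i \<Rightarrow> 'a::real_normed_vector) \<Rightarrow> complex"
  assumes "lipschitz_near I \<Phi> S0" "lipschitz_near I \<Psi> S0" "\<Psi> S0 \<noteq> 0"
  shows "lipschitz_near I (\<lambda>S. \<Phi> S / \<Psi> S) S0"
proof -
  have "lipschitz_near I (\<lambda>S. inverse (\<Psi> S)) S0"
  proof (rule lipschitz_near_compose_holomorphic[OF assms(2)])
    show "inverse holomorphic_on - {0}"
      using holomorphic_on_inverse[OF holomorphic_on_id, of "- {0}"] by (simp add: id_def)
  qed (use assms(3) in auto)
  from lipschitz_near_mult[OF assms(1) this] show ?thesis
    by (simp add: divide_inverse)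
qed

lemma lipschitz_near_prod:
  fixes \<Phi> :: "'j \<Rightarrow> ('i \<Rightarrow> 'a::real_normed_vector) \<Rightarrow> 'b::{real_normed_algebra_1,comm_ring_1}"
  assumes "finite J" "\<And>j. j \<in> J \<Longrightarrow> lipschitz_near I (\<Phi> j) S0"
  shows "lipschitz_near I (\<lambda>S. \<Prod>j\<in>J. \<Phi> j S) S0"
  using assms
proof (induction J rule: finite_induct)
  case (insert j J)
  then show ?case
    using lipschitz_near_mult[of I "\<Phi> j" S0 "\<lambda>S. \<Prod>j\<in>J. \<Phi> j S"] by simp
qed (simp add: lipschitz_near_const)

lemma lipschitz_near_uniform:
  assumes "finite J" "\<And>j. j \<in> J \<Longrightarrow> lipschitz_near I (\<Phi> j) S0"
  obtains r L where "r > 0" "L \<ge> 0"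
    "\<And>j S T. j \<in> J \<Longrightarrow> dist_on I S S0 < r \<Longrightarrow> dist_on I T S0 < r \<Longrightarrow>
      norm (\<Phi> j S - \<Phi> j T) \<le> L * dist_on I S T"
proof -
  obtain r L where rL: "\<And>j. j \<in> J \<Longrightarrow> r j > 0 \<and> L j \<ge> 0 \<and> (\<forall>S T. dist_on I S S0 < r j \<longrightarrow>
      dist_on I T S0 < r j \<longrightarrow> norm (\<Phi> j S - \<Phi> j T) \<le> L j * dist_on I S T)"
    using assms(2) unfolding lipschitz_near_def by metis
  define r0 where "r0 = Min (insert 1 (r ` J))"
  define L0 where "L0 = (\<Sum>j\<in>J. L j)"
  show thesis
  proof
    show "r0 > 0"
      unfolding r0_def using assms(1) rL by (auto simp: Min_gr_iff)
    show "L0 \<ge> 0"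
      unfolding L0_def using rL by (simp add: sum_nonneg)
    fix j S T assume j: "j \<in> J" and ST: "dist_on I S S0 < r0" "dist_on I T S0 < r0"
    have "r0 \<le> r j"
      unfolding r0_def using assms(1) j by simp
    then have "norm (\<Phi> j S - \<Phi> j T) \<le> L j * dist_on I S T"
      using rL[OF j] ST by simp
    also have "\<dots> \<le> L0 * dist_on I S T"
      unfolding L0_def using assms(1) j rL
      by (intro mult_right_mono member_le_sum) (auto simp: dist_on_nonneg)
    finally show "norm (\<Phi> j S - \<Phi> j T) \<le> L0 * dist_on I S T" .
  qed
qed

section \<open>Uniqueness for systems of ordinary differential equations\<close>

lemma vector_differentiable_bound:
  fixes f :: "real \<Rightarrow> 'a::real_normed_vector"
  assumes "convex K" "\<And>s. s \<in> K \<Longrightarrow> (f has_vector_derivative f' s) (at s)"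
    "\<And>s. s \<in> K \<Longrightarrow> norm (f' s) \<le> B" "a \<in> K" "b \<in> K"
  shows "norm (f b - f a) \<le> B * \<bar>b - a\<bar>"
proof -
  have "norm (f b - f a) \<le> B * norm (b - a)"
  proof (rule differentiable_bound[of K f "\<lambda>s h. h *\<^sub>R f' s"])
    show "(f has_derivative (\<lambda>h. h *\<^sub>R f' s)) (at s within K)" if "s \<in> K" for s
      using assms(2)[OF that] unfolding has_vector_derivative_def
      by (rule has_derivative_at_withinI)
    show "onorm (\<lambda>h. h *\<^sub>R f' s) \<le> B" if "s \<in> K" for s
      using assms(3)[OF that]
      by (intro onorm_le) (metis abs_ge_zero mult.commute mult_left_mono norm_scaleR real_norm_def)
  qed (use assms(1,4,5) in auto)
  then show ?thesis
    by simp
qed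

lemma connected_zero_set_imp_zero:
  fixes D :: "'a::topological_space \<Rightarrow> real"
  assumes "connected S" "continuous_on S D" "a \<in> S" "D a = 0"
    and zeros_open: "\<And>x. x \<in> S \<Longrightarrow> D x = 0 \<Longrightarrow> \<forall>\<^sub>F y in nhds x. D y = 0"
    and "x \<in> S"
  shows "D x = 0"
proof -
  define A where "A = {x \<in> S. D x = 0}"
  have "closedin (top_of_set S) A"
    unfolding A_def using assms(2) by (rule continuous_closedin_preimage_constant)
  moreover have "openin (top_of_set S) A"
    unfolding openin_subopen[of _ A]
  proof
    fix x assume "x \<in> A"
    then obtain T where "open T" "x \<in> T" "\<forall>y\<in>T. D y = 0"
      using zeros_open unfolding A_def eventually_nhds by blast
    then show "\<exists>T'. openin (top_of_set S) T' \<and> x \<in> T' \<and> T' \<subseteq> A"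
      using \<open>x \<in> A\<close> unfolding A_def by (intro exI[of _ "S \<inter> T"]) auto
  qed
  ultimately have "A = S"
    using assms(1,3,4) unfolding connected_clopen A_def by blast
  then show ?thesis
    using assms(6) unfolding A_def by blast
qed

lemma continuous_on_dist_on:
  assumes "\<And>i. i \<in> I \<Longrightarrow> continuous_on U (Y i)" "\<And>i. i \<in> I \<Longrightarrow> continuous_on U (Y' i)"
  shows "continuous_on U (\<lambda>t. dist_on I (\<lambda>i. Y i t) (\<lambda>i. Y' i t))"
  unfolding dist_on_def using assms by (intro continuous_intros) auto

lemma continuous_on_if_has_vector_derivative_at:
  "(\<And>x. x \<in> S \<Longrightarrow> (f has_vector_derivative f' x) (at x)) \<Longrightarrow> continuous_on S f"
  by (rule continuous_on_vector_derivative) (rule has_vector_derivative_at_within)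

text \<open>On \<open>K = cball x1 \<eta>\<close> the mean value inequality bounds the distance of the two
  solutions by \<open>card I * L * \<eta> * M \<le> M / 2\<close>, where \<open>M\<close> is its maximum on \<open>K\<close>;
  hence \<open>M = 0\<close>.\<close>

lemma ode_solutions_agree_near:
  fixes Y Y' :: "'i \<Rightarrow> real \<Rightarrow> 'a::real_normed_vector" and \<Phi> :: "'i \<Rightarrow> ('i \<Rightarrow> 'a) \<Rightarrow> 'a"
  assumes "finite I" "open Om" "x1 \<in> Om"
    and lip: "\<And>i. i \<in> I \<Longrightarrow> lipschitz_near I (\<Phi> i) (\<lambda>k. Y k x1)"
    and Y: "\<And>i x. i \<in> I \<Longrightarrow> x \<in> Om \<Longrightarrow> (Y i has_vector_derivative \<Phi> i (\<lambda>k. Y k x)) (at x)"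
    and Y': "\<And>i x. i \<in> I \<Longrightarrow> x \<in> Om \<Longrightarrow> (Y' i has_vector_derivative \<Phi> i (\<lambda>k. Y' k x)) (at x)"
    and eq: "\<And>i. i \<in> I \<Longrightarrow> Y i x1 = Y' i x1"
  shows "\<forall>\<^sub>F x in nhds x1. \<forall>i\<in>I. Y i x = Y' i x"
proof -
  define S0 where "S0 = (\<lambda>k. Y k x1)"
  define D where "D t = dist_on I (\<lambda>k. Y k t) (\<lambda>k. Y' k t)" for t
  have "\<And>i. i \<in> I \<Longrightarrow> lipschitz_near I (\<Phi> i) S0"
    using lip unfolding S0_def .
  then obtain r L where r: "r > 0" "L \<ge> 0" and lipschitz:
    "\<And>i S T. i \<in> I \<Longrightarrow> dist_on I S S0 < r \<Longrightarrow> dist_on I T S0 < r \<Longrightarrow>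
      norm (\<Phi> i S - \<Phi> i T) \<le> L * dist_on I S T"
    using lipschitz_near_uniform[OF assms(1)] by blast
  have cont: "continuous_on Om (Y i)" "continuous_on Om (Y' i)" if "i \<in> I" for i
    using that by (auto intro!: continuous_on_if_has_vector_derivative_at Y Y')
  have near: "\<forall>\<^sub>F t in nhds x1. dist_on I (\<lambda>k. Z k t) S0 < r"
    if "Z = Y \<or> Z = Y'" for Z
  proof -
    have "continuous_on Om (\<lambda>t. dist_on I (\<lambda>k. Z k t) (\<lambda>k. S0 k))"
      by (rule continuous_on_dist_on) (use cont that in auto)
    then have "isCont (\<lambda>t. dist_on I (\<lambda>k. Z k t) S0) x1"
      using assms(2,3) continuous_on_eq_continuous_at by blast
    moreover have "dist_on I (\<lambda>k. Z k x1) S0 = 0"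
      using that eq assms(1) unfolding S0_def by (auto simp: dist_on_eq_0_iff)
    ultimately have "((\<lambda>t. dist_on I (\<lambda>k. Z k t) S0) \<longlongrightarrow> 0) (nhds x1)"
      by (metis isCont_def tendsto_at_iff_tendsto_nhds)
    then show ?thesis
      using r(1) by (rule order_tendstoD(2))
  qed
  obtain d where d: "d > 0" and in_d: "\<And>t. dist t x1 \<le> d \<Longrightarrow>
      t \<in> Om \<and> dist_on I (\<lambda>k. Y k t) S0 < r \<and> dist_on I (\<lambda>k. Y' k t) S0 < r"
    using eventually_conj[OF eventually_nhds_in_open[OF assms(2,3)]
        eventually_conj[OF near near]]
    unfolding eventually_nhds_metric_le by blast
  define c where "c = card I * L + 1"
  have "c > 0"
    unfolding c_def using r(2) by (simp add: add_nonneg_pos)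
  define \<eta> where "\<eta> = min d (1 / (2 * c))"
  have \<eta>: "\<eta> > 0" "\<eta> \<le> d" "card I * L * \<eta> \<le> 1 / 2"
  proof -
    have "card I * L * \<eta> \<le> c * (1 / (2 * c))"
      unfolding \<eta>_def c_def using r(2) d by (intro mult_mono) auto
    also have "\<dots> = 1 / 2"
      using \<open>c > 0\<close> by simp
    finally show "card I * L * \<eta> \<le> 1 / 2" .
  qed (use d \<open>c > 0\<close> in \<open>auto simp: \<eta>_def\<close>)
  define K where "K = cball x1 \<eta>"
  have in_K: "t \<in> Om" "dist_on I (\<lambda>k. Y k t) S0 < r" "dist_on I (\<lambda>k. Y' k t) S0 < r"
    if "t \<in> K" for t
    using in_d[of t] that \<eta>(2) unfolding K_def by (auto simp: dist_commute)
  have "continuous_on K D"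
    unfolding D_def
    by (rule continuous_on_dist_on) (use cont in_K in \<open>auto intro: continuous_on_subset\<close>)
  then obtain ts where ts: "ts \<in> K" "\<And>t. t \<in> K \<Longrightarrow> D t \<le> D ts"
    using continuous_attains_sup[of K D] \<eta>(1) unfolding K_def by auto
  define M where "M = D ts"
  have "M \<ge> 0"
    unfolding M_def D_def by (rule dist_on_nonneg)
  have component: "norm (Y i t - Y' i t) \<le> L * M * \<eta>" if "i \<in> I" "t \<in> K" for i t
  proof -
    have "norm ((Y i t - Y' i t) - (Y i x1 - Y' i x1)) \<le> L * M * \<bar>t - x1\<bar>"
    proof (rule vector_differentiable_bound[of K])
      fix s assume "s \<in> K"
      then show "((\<lambda>s. Y i s - Y' i s) has_vector_derivative
          \<Phi> i (\<lambda>k. Y k s) - \<Phi> i (\<lambda>k. Y' k s)) (at s)"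
        using Y Y' in_K \<open>i \<in> I\<close> by (auto intro!: has_vector_derivative_diff)
      have "norm (\<Phi> i (\<lambda>k. Y k s) - \<Phi> i (\<lambda>k. Y' k s)) \<le> L * D s"
        unfolding D_def using lipschitz \<open>i \<in> I\<close> in_K \<open>s \<in> K\<close> by blast
      also have "\<dots> \<le> L * M"
        unfolding M_def using ts(2) \<open>s \<in> K\<close> r(2) by (simp add: mult_left_mono)
      finally show "norm (\<Phi> i (\<lambda>k. Y k s) - \<Phi> i (\<lambda>k. Y' k s)) \<le> L * M" .
    qed (use that \<eta>(1) in \<open>auto simp: K_def\<close>)
    moreover have "L * M * \<bar>t - x1\<bar> \<le> L * M * \<eta>"
      using that(2) r(2) \<open>M \<ge> 0\<close> unfolding K_def
      by (intro mult_left_mono) (auto simp: dist_real_def)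
    ultimately show ?thesis
      using eq[OF that(1)] by simp
  qed
  have "D t \<le> card I * L * M * \<eta>" if "t \<in> K" for t
    unfolding D_def dist_on_def
    using sum_bounded_above[of I "\<lambda>i. norm (Y i t - Y' i t)" "L * M * \<eta>"] component that
    by (simp add: mult.assoc)
  also have "card I * L * M * \<eta> \<le> M / 2"
    using mult_right_mono[OF \<eta>(3) \<open>M \<ge> 0\<close>] by (simp add: algebra_simps)
  finally have "M = 0"
    using ts(1) \<open>M \<ge> 0\<close> unfolding M_def by fastforce
  then have "\<forall>i\<in>I. Y i t = Y' i t" if "t \<in> K" for t
    using ts(2)[OF that] dist_on_nonneg dist_on_eq_0_iff[OF assms(1)]
    unfolding M_def D_def by (metis order_antisym)
  then show ?thesis
    unfolding eventually_nhds_metric_le K_def using \<eta>(1) by (auto simp: dist_commute)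
qed

lemma ode_solutions_unique:
  fixes Y Y' :: "'i \<Rightarrow> real \<Rightarrow> 'a::real_normed_vector" and \<Phi> :: "'i \<Rightarrow> ('i \<Rightarrow> 'a) \<Rightarrow> 'a"
  assumes "finite I" "open Om" "connected Om" "x0 \<in> Om"
    and lip: "\<And>i x. i \<in> I \<Longrightarrow> x \<in> Om \<Longrightarrow> lipschitz_near I (\<Phi> i) (\<lambda>k. Y k x)"
    and Y: "\<And>i x. i \<in> I \<Longrightarrow> x \<in> Om \<Longrightarrow> (Y i has_vector_derivative \<Phi> i (\<lambda>k. Y k x)) (at x)"
    and Y': "\<And>i x. i \<in> I \<Longrightarrow> x \<in> Om \<Longrightarrow> (Y' i has_vector_derivative \<Phi> i (\<lambda>k. Y' k x)) (at x)"
    and init: "\<And>i. i \<in> I \<Longrightarrow> Y i x0 = Y' i x0"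
    and "i \<in> I" "x \<in> Om"
  shows "Y i x = Y' i x"
proof -
  define D where "D t = dist_on I (\<lambda>k. Y k t) (\<lambda>k. Y' k t)" for t
  have "continuous_on Om D"
    unfolding D_def
    by (rule continuous_on_dist_on) (auto intro!: continuous_on_if_has_vector_derivative_at Y Y')
  then have "D x = 0"
  proof (rule connected_zero_set_imp_zero[OF assms(3) _ assms(4)])
    show "D x0 = 0"
      unfolding D_def using init by (simp add: dist_on_eq_0_iff[OF assms(1)])
    show "\<forall>\<^sub>F y in nhds x1. D y = 0" if "x1 \<in> Om" "D x1 = 0" for x1
    proof -
      have "\<forall>\<^sub>F y in nhds x1. \<forall>i\<in>I. Y i y = Y' i y"
      proof (rule ode_solutions_agree_near[OF assms(1,2) that(1)])
        show "Y i x1 = Y' i x1" if "i \<in> I" for i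
          using \<open>D x1 = 0\<close> that unfolding D_def by (simp add: dist_on_eq_0_iff[OF assms(1)])
      qed (use lip Y Y' that(1) in auto)
      then show ?thesis
        unfolding D_def by eventually_elim (simp add: dist_on_eq_0_iff[OF assms(1)])
    qed
  qed fact
  then show ?thesis
    unfolding D_def using assms(1,9) by (simp add: dist_on_eq_0_iff)
qed

section \<open>The Dubrovin vector field\<close>

lemma Inl_Inr_in_Plus_iff [simp]: "Inl a \<in> A <+> B \<longleftrightarrow> a \<in> A" "Inr b \<in> A <+> B \<longleftrightarrow> b \<in> B"
  by auto

text \<open>In a state \<open>S\<close>, the components \<open>S (Inl j)\<close> and \<open>S (Inr j)\<close> are the \<open>z\<close>- and the
  \<open>y\<close>-coordinate of the \<open>j\<close>-th point on the curve.\<close>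

definition dubrovin_field ::
  "nat \<Rightarrow> (nat \<Rightarrow> complex) \<Rightarrow> nat + nat \<Rightarrow> (nat + nat \<Rightarrow> complex) \<Rightarrow> complex" where
  "dubrovin_field n E i S = (case i of
      Inl j \<Rightarrow> -2 * \<i> * S (Inr j) / (\<Prod>l\<in>{1..n} - {j}. S (Inl j) - S (Inl l))
    | Inr j \<Rightarrow> - \<i> * deriv (Rfun n E) (S (Inl j)) / (\<Prod>l\<in>{1..n} - {j}. S (Inl j) - S (Inl l)))"

lemma dubrovin_field_simps [simp]:
  "dubrovin_field n E (Inl j) S = -2 * \<i> * S (Inr j) / (\<Prod>l\<in>{1..n} - {j}. S (Inl j) - S (Inl l))"
  "dubrovin_field n E (Inr j) S =
    - \<i> * deriv (Rfun n E) (S (Inl j)) / (\<Prod>l\<in>{1..n} - {j}. S (Inl j) - S (Inl l))"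
  unfolding dubrovin_field_def by simp_all

lemma Rfun_holomorphic: "Rfun n E holomorphic_on UNIV"
  unfolding Rfun_def[abs_def] by (intro holomorphic_intros)

lemma lipschitz_near_dubrovin_field:
  assumes "i \<in> {1..n} <+> {1..n}"
    and distinct: "\<And>j l. j \<in> {1..n} \<Longrightarrow> l \<in> {1..n} \<Longrightarrow> j \<noteq> l \<Longrightarrow> S0 (Inl j) \<noteq> S0 (Inl l)"
  shows "lipschitz_near ({1..n} <+> {1..n}) (dubrovin_field n E i) S0"
proof -
  let ?I = "{1..n} <+> {1..n}"
  obtain j where j: "j \<in> {1..n}" "i = Inl j \<or> i = Inr j"
    using assms(1) by blast
  have component: "lipschitz_near ?I (\<lambda>S. S (Inl k)) S0" "lipschitz_near ?I (\<lambda>S. S (Inr k)) S0"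
    if "k \<in> {1..n}" for k
    using that by (auto intro!: lipschitz_near_component)
  have gap: "lipschitz_near ?I (\<lambda>S. \<Prod>l\<in>{1..n} - {j}. S (Inl j) - S (Inl l)) S0"
    by (rule lipschitz_near_prod) (use j(1) component in \<open>auto intro: lipschitz_near_diff\<close>)
  have gap_nonzero: "(\<Prod>l\<in>{1..n} - {j}. S0 (Inl j) - S0 (Inl l)) \<noteq> 0"
    using j(1) distinct by auto
  have "lipschitz_near ?I (\<lambda>S. -2 * \<i> * S (Inr j)) S0"
    by (rule lipschitz_near_mult[OF lipschitz_near_const component(2)[OF j(1)]])
  then have "lipschitz_near ?I
      (\<lambda>S. -2 * \<i> * S (Inr j) / (\<Prod>l\<in>{1..n} - {j}. S (Inl j) - S (Inl l))) S0"
    using gap_nonzero by (rule lipschitz_near_divide[OF _ gap])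
  then have Inl: "lipschitz_near ?I (dubrovin_field n E (Inl j)) S0"
    unfolding dubrovin_field_def[abs_def] by simp
  have "lipschitz_near ?I (\<lambda>S. deriv (Rfun n E) (S (Inl j))) S0"
    by (rule lipschitz_near_compose_holomorphic[OF component(1)[OF j(1)]
          holomorphic_deriv[OF Rfun_holomorphic open_UNIV] open_UNIV]) simp
  then have "lipschitz_near ?I (\<lambda>S. - \<i> * deriv (Rfun n E) (S (Inl j))) S0"
    by (rule lipschitz_near_mult[OF lipschitz_near_const])
  then have "lipschitz_near ?I
      (\<lambda>S. - \<i> * deriv (Rfun n E) (S (Inl j)) / (\<Prod>l\<in>{1..n} - {j}. S (Inl j) - S (Inl l))) S0"
    using gap_nonzero by (rule lipschitz_near_divide[OF _ gap])
  then have Inr: "lipschitz_near ?I (dubrovin_field n E (Inr j)) S0"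
    unfolding dubrovin_field_def[abs_def] by simp
  show ?thesis
    using j(2) Inl Inr by auto
qed

lemma Ck_on_dubrovin_field:
  assumes "open Om" and Y: "\<And>i. i \<in> {1..n} <+> {1..n} \<Longrightarrow> Ck_on Om k (Y i)"
    and distinct: "\<And>x j l. x \<in> Om \<Longrightarrow> j \<in> {1..n} \<Longrightarrow> l \<in> {1..n} \<Longrightarrow> j \<noteq> l \<Longrightarrow>
      Y (Inl j) x \<noteq> Y (Inl l) x"
    and "i \<in> {1..n} <+> {1..n}"
  shows "Ck_on Om k (\<lambda>x. dubrovin_field n E i (\<lambda>k. Y k x))"
proof -
  obtain j where j: "j \<in> {1..n}" "i = Inl j \<or> i = Inr j"
    using assms(4) by blast
  have Y_Inl: "Ck_on Om k (Y (Inl l))" and Y_Inr: "Ck_on Om k (Y (Inr l))" if "l \<in> {1..n}" for l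
    using Y that by blast+
  have gap: "Ck_on Om k (\<lambda>x. \<Prod>l\<in>{1..n} - {j}. Y (Inl j) x - Y (Inl l) x)"
    by (rule Ck_on_prod[OF assms(1)]) (use j(1) Y_Inl in \<open>auto intro!: Ck_on_diff[OF assms(1)]\<close>)
  have gap_nonzero: "(\<Prod>l\<in>{1..n} - {j}. Y (Inl j) x - Y (Inl l) x) \<noteq> 0" if "x \<in> Om" for x
    using j(1) distinct[OF that] by auto
  have "Ck_on Om k (\<lambda>x. -2 * \<i> * Y (Inr j) x)"
    by (rule Ck_on_mult[OF assms(1) Ck_on_const Y_Inr[OF j(1)]])
  then have "Ck_on Om k (\<lambda>x. -2 * \<i> * Y (Inr j) x / (\<Prod>l\<in>{1..n} - {j}. Y (Inl j) x - Y (Inl l) x))"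
    by (rule Ck_on_divide[OF assms(1) _ gap gap_nonzero])
  then have Inl: "Ck_on Om k (\<lambda>x. dubrovin_field n E (Inl j) (\<lambda>k. Y k x))"
    by simp
  have "Ck_on Om k (\<lambda>x. deriv (Rfun n E) (Y (Inl j) x))"
    by (rule Ck_on_compose_holomorphic[OF assms(1) open_UNIV
          holomorphic_deriv[OF Rfun_holomorphic open_UNIV] _ Y_Inl[OF j(1)]]) simp
  then have "Ck_on Om k (\<lambda>x. - \<i> * deriv (Rfun n E) (Y (Inl j) x))"
    by (rule Ck_on_mult[OF assms(1) Ck_on_const])
  then have "Ck_on Om k
      (\<lambda>x. - \<i> * deriv (Rfun n E) (Y (Inl j) x) / (\<Prod>l\<in>{1..n} - {j}. Y (Inl j) x - Y (Inl l) x))"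
    by (rule Ck_on_divide[OF assms(1) _ gap gap_nonzero])
  then have Inr: "Ck_on Om k (\<lambda>x. dubrovin_field n E (Inr j) (\<lambda>k. Y k x))"
    by simp
  show ?thesis
    using j(2) Inl Inr by auto
qed

lemma smooth_on_dubrovin_solution:
  fixes Y :: "nat + nat \<Rightarrow> real \<Rightarrow> complex"
  assumes "open Om"
    and ode: "\<And>i x. i \<in> {1..n} <+> {1..n} \<Longrightarrow> x \<in> Om \<Longrightarrow>
      (Y i has_vector_derivative dubrovin_field n E i (\<lambda>k. Y k x)) (at x)"
    and distinct: "\<And>x j l. x \<in> Om \<Longrightarrow> j \<in> {1..n} \<Longrightarrow> l \<in> {1..n} \<Longrightarrow> j \<noteq> l \<Longrightarrow>
      Y (Inl j) x \<noteq> Y (Inl l) x"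
    and "i \<in> {1..n} <+> {1..n}"
  shows "smooth_on Om (Y i)"
proof -
  have "\<forall>i\<in>{1..n} <+> {1..n}. Ck_on Om k (Y i)" for k
  proof (induction k)
    case 0
    then show ?case
      unfolding Ck_on_0 using ode differentiableI_vector by blast
  next
    case (Suc k)
    show ?case
    proof
      fix i assume i: "i \<in> {1..n} <+> {1..n}"
      have field: "Ck_on Om k (\<lambda>x. dubrovin_field n E i (\<lambda>k. Y k x))"
        by (rule Ck_on_dubrovin_field[where Y = Y, OF assms(1) _ distinct i]) (use Suc.IH in blast)
      show "Ck_on Om (Suc k) (Y i)"
        by (rule Ck_on_SucI[OF assms(1) _ field]) (rule ode[OF i])
    qed
  qed
  then show ?thesis
    unfolding smooth_on_iff_Ck_on using assms(4) by blast
qed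

lemma dubrovin_sol_has_vector_derivative:
  assumes "dubrovin_sol n E Om z w" "i \<in> {1..n} <+> {1..n}" "x \<in> Om"
  shows "(case_sum z w i has_vector_derivative dubrovin_field n E i (\<lambda>k. case_sum z w k x)) (at x)"
  using assms unfolding dubrovin_sol_def by auto

lemma dubrovin_sol_unique:
  assumes "open Om" "connected Om" "x0 \<in> Om"
    and sol: "dubrovin_sol n E Om z w" and sol': "dubrovin_sol n E Om z' w'"
    and init: "\<And>j. j \<in> {1..n} \<Longrightarrow> z' j x0 = z j x0 \<and> w' j x0 = w j x0"
    and "j \<in> {1..n}" "x \<in> Om"
  shows "z' j x = z j x \<and> w' j x = w j x"
proof -
  let ?I = "{1..n} <+> {1..n}"
  have eq: "case_sum z w i x = case_sum z' w' i x" if "i \<in> ?I" for i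
  proof (rule ode_solutions_unique[where \<Phi> = "dubrovin_field n E",
        OF _ assms(1-3) _ _ _ _ that assms(8)])
    show "lipschitz_near ?I (dubrovin_field n E i) (\<lambda>k. case_sum z w k x)"
      if "i \<in> ?I" "x \<in> Om" for i x
      using sol that unfolding dubrovin_sol_def by (intro lipschitz_near_dubrovin_field) auto
    show "case_sum z w i x0 = case_sum z' w' i x0" if "i \<in> ?I" for i
      using init that by auto
  qed (use dubrovin_sol_has_vector_derivative[OF sol]
      dubrovin_sol_has_vector_derivative[OF sol'] in auto)
  have "Inl j \<in> ?I" "Inr j \<in> ?I"
    using assms(7) by auto
  from eq[OF this(1)] eq[OF this(2)] show ?thesis
    by simp
qed

section \<open>Motion of the roots\<close>

text \<open>The zeros \<open>\<mu>\<^sub>j\<close> of \<open>F\<^sub>n\<close> are the case \<open>p = f, q = h, \<sigma> = -1\<close>, the zeros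
  \<open>\<nu>\<^sub>j\<close> of \<open>H\<^sub>n\<close> the case \<open>p = h, q = f, \<sigma> = 1\<close>.\<close>

locale dubrovin_roots =
  fixes n :: nat and p q g :: "nat \<Rightarrow> real \<Rightarrow> complex" and c :: "real \<Rightarrow> complex"
    and \<sigma> :: complex and E :: "nat \<Rightarrow> complex" and Om :: "real set" and \<zeta> :: "nat \<Rightarrow> real \<Rightarrow> complex"
  assumes p_differentiable: "\<And>k x. k \<le> n \<Longrightarrow> p k differentiable (at x)"
    and g_differentiable: "\<And>k x. k < n \<Longrightarrow> g k differentiable (at x)"
    and P_deriv: "\<And>z x. ((\<lambda>t. Fpoly n p z t) has_vector_derivative
      c x * Fpoly n p z x + 2 * \<i> * \<sigma> * z * Gpoly n g z x) (at x)"
    and G_deriv: "\<And>z x. ((\<lambda>t. Gpoly n g z t) has_vector_derivative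
      \<i> * \<sigma> * (Fpoly n p z x - Fpoly n q z x)) (at x)"
    and R_eq: "\<And>z x. z\<^sup>2 * (Gpoly n g z x)\<^sup>2 + z * Fpoly n p z x * Fpoly n q z x = Rfun n E z"
    and sigma_sq: "\<sigma>\<^sup>2 = 1"
    and open_Om: "open Om"
    and factorization: "\<And>x z. x \<in> Om \<Longrightarrow> Fpoly n p z x = (\<Prod>j\<in>{1..n}. z - \<zeta> j x)"
    and continuous_roots: "\<And>j. j \<in> {1..n} \<Longrightarrow> continuous_on Om (\<zeta> j)"
    and distinct_roots: "\<And>x j l. x \<in> Om \<Longrightarrow> j \<in> {1..n} \<Longrightarrow> l \<in> {1..n} \<Longrightarrow> j \<noteq> l \<Longrightarrow>
      \<zeta> j x \<noteq> \<zeta> l x"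
begin

definition root_y :: "nat \<Rightarrow> real \<Rightarrow> complex" where
  "root_y j x = \<sigma> * \<zeta> j x * Gpoly n g (\<zeta> j x) x"

lemma root_y_on_curve: "x \<in> Om \<Longrightarrow> j \<in> {1..n} \<Longrightarrow> (root_y j x)\<^sup>2 = Rfun n E (\<zeta> j x)"
proof -
  assume "x \<in> Om" "j \<in> {1..n}"
  then have "Fpoly n p (\<zeta> j x) x = 0"
    using factorization by auto
  then show ?thesis
    using R_eq[of "\<zeta> j x" x] sigma_sq unfolding root_y_def by (simp add: power_mult_distrib)
qed

lemma factorization_at_root:
  assumes "x \<in> Om" "j \<in> {1..n}"
  shows "Fpoly n p z x = (z - \<zeta> j x) * (\<Prod>l\<in>{1..n} - {j}. z - \<zeta> l x)"
  using factorization[OF assms(1)] prod.remove[of "{1..n}" j] assms(2) by simp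

lemma root_gap_nonzero: "x \<in> Om \<Longrightarrow> j \<in> {1..n} \<Longrightarrow> (\<Prod>l\<in>{1..n} - {j}. \<zeta> j x - \<zeta> l x) \<noteq> 0"
  using distinct_roots by auto

lemma Fpoly_has_field_derivative_at_root:
  assumes "x \<in> Om" "j \<in> {1..n}"
  shows "((\<lambda>z. Fpoly n p z x) has_field_derivative (\<Prod>l\<in>{1..n} - {j}. \<zeta> j x - \<zeta> l x)) (at (\<zeta> j x))"
proof -
  define Q where "Q z = (\<Prod>l\<in>{1..n} - {j}. z - \<zeta> l x)" for z
  have "Q holomorphic_on UNIV"
    unfolding Q_def by (intro holomorphic_intros)
  then have "(Q has_field_derivative deriv Q (\<zeta> j x)) (at (\<zeta> j x))"
    using holomorphic_derivI[of Q UNIV] by simp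
  then have "((\<lambda>z. (z - \<zeta> j x) * Q z) has_field_derivative Q (\<zeta> j x)) (at (\<zeta> j x))"
    by (auto intro!: derivative_eq_intros)
  then show ?thesis
    unfolding factorization_at_root[OF assms] Q_def .
qed

lemma root_has_vector_derivative:
  assumes "x \<in> Om" "j \<in> {1..n}"
  shows "(\<zeta> j has_vector_derivative -2 * \<i> * root_y j x / (\<Prod>l\<in>{1..n} - {j}. \<zeta> j x - \<zeta> l x)) (at x)"
proof -
  have Pt: "((\<lambda>t. Fpoly n p (\<zeta> j x) t) has_vector_derivative
      2 * \<i> * \<sigma> * \<zeta> j x * Gpoly n g (\<zeta> j x) x) (at x)"
    using P_deriv[of "\<zeta> j x" x] factorization_at_root[OF assms, of "\<zeta> j x"] by simp
  have root: "\<forall>\<^sub>F t in nhds x. Fpoly n p (\<zeta> j t) t = 0"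
    using eventually_nhds_in_open[OF open_Om assms(1)]
    by eventually_elim (use factorization_at_root assms(2) in simp)
  have "isCont (\<zeta> j) x"
    using continuous_roots[OF assms(2)] open_Om assms(1) continuous_on_eq_continuous_at by blast
  from polynomial_root_has_vector_derivative[OF _ _ Pt[unfolded Fpoly_def]
      Fpoly_has_field_derivative_at_root[OF assms, unfolded Fpoly_def]
      root_gap_nonzero[OF assms] this root[unfolded Fpoly_def]]
  show ?thesis
    using p_differentiable unfolding root_y_def by (simp add: mult.assoc)
qed

lemma root_y_has_vector_derivative:
  assumes "x \<in> Om" "j \<in> {1..n}"
  shows "(root_y j has_vector_derivative
    - \<i> * deriv (Rfun n E) (\<zeta> j x) / (\<Prod>l\<in>{1..n} - {j}. \<zeta> j x - \<zeta> l x)) (at x)"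
proof -
  define a where "a = \<zeta> j x"
  define Q where "Q = (\<Prod>l\<in>{1..n} - {j}. a - \<zeta> l x)"
  define G where "G = Gpoly n g a x"
  define H where "H = Fpoly n q a x"
  define Gz where "Gz = (\<Sum>i<n. g (n - 1 - i) x * (of_nat i * a ^ (i - 1)))"
  define d where "d = -2 * \<i> * (\<sigma> * a * G) / Q"
  have "Q \<noteq> 0"
    using root_gap_nonzero[OF assms] unfolding Q_def a_def .
  have P_root: "Fpoly n p a x = 0"
    using factorization_at_root[OF assms] unfolding a_def by simp
  have d\<zeta>: "(\<zeta> j has_vector_derivative d) (at x)"
    using root_has_vector_derivative[OF assms] unfolding d_def root_y_def Q_def G_def a_def .
  have Gt: "((\<lambda>t. Gpoly n g a t) has_vector_derivative - \<i> * \<sigma> * H) (at x)"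
    using G_deriv[of a x] P_root unfolding H_def by simp
  have "((\<lambda>t. Gpoly n g (\<zeta> j t) t) has_vector_derivative - \<i> * \<sigma> * H + d * Gz) (at x)"
    using polynomial_family_has_vector_derivative[OF _ _ Gt[unfolded Gpoly_def a_def] d\<zeta>]
      g_differentiable
    unfolding Gpoly_def Gz_def a_def by simp
  with d\<zeta> have y': "(root_y j has_vector_derivative
      \<sigma> * (d * G + a * (- \<i> * \<sigma> * H + d * Gz))) (at x)"
    unfolding root_y_def[abs_def] G_def a_def
    by (auto intro!: derivative_eq_intros simp: algebra_simps)
  have Gz': "((\<lambda>z. Gpoly n g z x) has_field_derivative Gz) (at a)"
    using has_field_derivative_polynomial[of "\<lambda>i. g (n - 1 - i) x" "{..<n}" a]
    unfolding Gpoly_def Gz_def by simp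
  obtain Hz where Hz': "((\<lambda>z. Fpoly n q z x) has_field_derivative Hz) (at a)"
    using has_field_derivative_polynomial[of "\<lambda>i. q (n - i) x" "{..n}" a]
    unfolding Fpoly_def by blast
  have Pz': "((\<lambda>z. Fpoly n p z x) has_field_derivative Q) (at a)"
    using Fpoly_has_field_derivative_at_root[OF assms] unfolding Q_def a_def .
  have "((\<lambda>z. z\<^sup>2 * (Gpoly n g z x)\<^sup>2 + z * Fpoly n p z x * Fpoly n q z x) has_field_derivative
      2 * a * G\<^sup>2 + 2 * a\<^sup>2 * G * Gz + a * Q * H) (at a)"
    using P_root unfolding G_def H_def
    by (auto intro!: derivative_eq_intros Gz' Hz' Pz' simp: power2_eq_square algebra_simps)
  moreover have "Rfun n E = (\<lambda>z. z\<^sup>2 * (Gpoly n g z x)\<^sup>2 + z * Fpoly n p z x * Fpoly n q z x)"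
    using R_eq by simp
  ultimately have R': "deriv (Rfun n E) a = 2 * a * G\<^sup>2 + 2 * a\<^sup>2 * G * Gz + a * Q * H"
    by (simp add: DERIV_imp_deriv)
  have "\<sigma> * (d * G + a * (- \<i> * \<sigma> * H + d * Gz)) =
      \<sigma>\<^sup>2 * (-2 * \<i> * a * G * (G + a * Gz) / Q - \<i> * a * H)"
    unfolding d_def
    by (simp add: algebra_simps power2_eq_square diff_divide_distrib add_divide_distrib)
  also have "\<dots> = - \<i> * deriv (Rfun n E) a / Q"
    using \<open>Q \<noteq> 0\<close> unfolding R' sigma_sq by (simp add: field_simps power2_eq_square)
  finally have "\<sigma> * (d * G + a * (- \<i> * \<sigma> * H + d * Gz)) = - \<i> * deriv (Rfun n E) a / Q" .
  with y' show ?thesis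
    unfolding Q_def a_def by simp
qed

lemma dubrovin_sol_roots: "dubrovin_sol n E Om \<zeta> root_y"
proof -
  have ode: "(case_sum \<zeta> root_y i has_vector_derivative
      dubrovin_field n E i (\<lambda>k. case_sum \<zeta> root_y k x)) (at x)"
    if "i \<in> {1..n} <+> {1..n}" "x \<in> Om" for i x
    using that root_has_vector_derivative root_y_has_vector_derivative by auto
  have smooth: "smooth_on Om (case_sum \<zeta> root_y i)" if "i \<in> {1..n} <+> {1..n}" for i
    by (rule smooth_on_dubrovin_solution[OF open_Om ode _ that]) (use distinct_roots in auto)
  show ?thesis
    unfolding dubrovin_sol_def
    using smooth[of "Inl _"] smooth[of "Inr _"] root_y_on_curve distinct_roots
      root_has_vector_derivative root_y_has_vector_derivative
    by (auto simp: Kn_def)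
qed

lemma dubrovin_result_roots:
  assumes "connected Om"
  shows "dubrovin_result n E Om \<zeta> (\<lambda>j x. \<sigma> * \<zeta> j x * Gpoly n g (\<zeta> j x) x)"
  using dubrovin_sol_roots dubrovin_sol_unique[OF open_Om assms _ dubrovin_sol_roots]
  unfolding dubrovin_result_def root_y_def[abs_def] by blast

end

theorem lemma3p2:
  fixes n :: nat
    and u :: "real \<Rightarrow> complex"
    and f g h :: "nat \<Rightarrow> real \<Rightarrow> complex"
    and E :: "nat \<Rightarrow> complex"
    and Om :: "real set"
    and mu nu :: "nat \<Rightarrow> real \<Rightarrow> complex"
  assumes u_smooth: "smooth_on UNIV u"
    and f_smooth: "\<forall>k\<le>n. smooth_on UNIV (f k)"
    and g_smooth: "\<forall>k<n. smooth_on UNIV (g k)"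
    and h_smooth: "\<forall>k\<le>n. smooth_on UNIV (h k)"
    and f0: "\<forall>x. f 0 x = 1" and h0: "\<forall>x. h 0 x = 1"
    and F_eq: "\<forall>z x. ((\<lambda>t. Fpoly n f z t) has_vector_derivative
                 (- \<i> * vector_derivative u (at x) * Fpoly n f z x - 2 * \<i> * z * Gpoly n g z x)) (at x)"
    and H_eq: "\<forall>z x. ((\<lambda>t. Fpoly n h z t) has_vector_derivative
                 (\<i> * vector_derivative u (at x) * Fpoly n h z x + 2 * \<i> * z * Gpoly n g z x)) (at x)"
    and G_eq: "\<forall>z x. ((\<lambda>t. Gpoly n g z t) has_vector_derivative
                 (\<i> * (Fpoly n h z x - Fpoly n f z x))) (at x)"
    and R_eq: "\<forall>z x. z\<^sup>2 * (Gpoly n g z x)\<^sup>2 + z * Fpoly n f z x * Fpoly n h z x = Rfun n E z"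
    and E0: "E 0 = 0"
    and E_distinct: "inj_on E {0..2*n}"
    and Om_open: "open Om" and Om_interval: "is_interval Om"
  shows
    "((\<forall>x\<in>Om. \<forall>z. Fpoly n f z x = (\<Prod>j\<in>{1..n}. z - mu j x)) \<and>
      (\<forall>j\<in>{1..n}. continuous_on Om (mu j)) \<and>
      (\<forall>x\<in>Om. \<forall>j\<in>{1..n}. \<forall>l\<in>{1..n}. j \<noteq> l \<longrightarrow> mu j x \<noteq> mu l x)
      \<longrightarrow> dubrovin_result n E Om mu (\<lambda>j x. - mu j x * Gpoly n g (mu j x) x))
     \<and>
     ((\<forall>x\<in>Om. \<forall>z. Fpoly n h z x = (\<Prod>j\<in>{1..n}. z - nu j x)) \<and>
      (\<forall>j\<in>{1..n}. continuous_on Om (nu j)) \<and>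
      (\<forall>x\<in>Om. \<forall>j\<in>{1..n}. \<forall>l\<in>{1..n}. j \<noteq> l \<longrightarrow> nu j x \<noteq> nu l x)
      \<longrightarrow> dubrovin_result n E Om nu (\<lambda>j x. nu j x * Gpoly n g (nu j x) x))"
proof -
  txt \<open>Only differentiability of the coefficients is used.\<close>
  have differentiable: "\<phi> differentiable (at x)" if "smooth_on UNIV \<phi>"
    for \<phi> :: "real \<Rightarrow> complex" and x
    using that Ck_on_0 unfolding smooth_on_iff_Ck_on by blast
  have F_eq': "((\<lambda>t. Fpoly n f z t) has_vector_derivative
      - \<i> * vector_derivative u (at x) * Fpoly n f z x + 2 * \<i> * - 1 * z * Gpoly n g z x) (at x)"
    for z x
    using F_eq by (auto elim: has_vector_derivative_eq_rhs)
  have G_eq': "((\<lambda>t. Gpoly n g z t) has_vector_derivative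
      \<i> * - 1 * (Fpoly n f z x - Fpoly n h z x)) (at x)" for z x
    using G_eq by (auto elim: has_vector_derivative_eq_rhs simp: algebra_simps)
  have R_eq': "z\<^sup>2 * (Gpoly n g z x)\<^sup>2 + z * Fpoly n h z x * Fpoly n f z x = Rfun n E z" for z x
    using R_eq by (simp add: mult_ac)
  show ?thesis
    using dubrovin_roots.dubrovin_result_roots[OF _ is_interval_connected[OF Om_interval],
        of n f h g "\<lambda>x. - \<i> * vector_derivative u (at x)" "-1" E mu]
      dubrovin_roots.dubrovin_result_roots[OF _ is_interval_connected[OF Om_interval],
        of n h f g "\<lambda>x. \<i> * vector_derivative u (at x)" 1 E nu]
      f_smooth g_smooth h_smooth differentiable F_eq' G_eq' H_eq G_eq R_eq R_eq' Om_open
    unfolding dubrovin_roots_def by auto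
qed

end
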